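(* Suppose both constraints are violated at the unconstrained Nash equilibrium, i.e., $B_{i,S}^{\text{NE}}<B_{i,S}^0$ for $i=1,2$. Then the Nash equilibrium with the regulatory constraints is of one of the following types: Type I. Both SPs increase their small-cell bandwidth allocations to exactly the required amount, i.e., $B_{1,S}=B_{1,S}^0$, $B_{2,S}=B_{2,S}^0$. Type II. One SP increases its small-cell bandwidth exactly to the required amount, while the other SP increases it further beyond the required amount, i.e., $B_{1,S}=B_{1,S}^0, B_{2,S}>B_{2,S}^0$ or $B_{1,S}>B_{1,S}^0, B_{2,S}=B_{2,S}^0$.
   Context: Two competing service providers (SPs), $i=1,2$, each have total licensed bandwidth $B_i$, split into macro-cell bandwidth $B_{i,M}$ and small-cell bandwidth $B_{i,S}$ with $B_{i,M}+B_{i,S}\le B_i$, $B_{i,M}\ge 0$, and regulatory constraint $B_{i,S}\ge B_{i,S}^0$. Macro-cells of SP $i$ provide rate $B_{i,M}R_0$, small-cells provide rate $\lambda_S B_{i,S}R_0$ with $\lambda_S>1$. Mobile users (density $N_m$) can only use macro-cells (with priority); fixed users (density $N_f$) can use macro- or small-cells of either SP. All users have utility $u(r)=r^{1-\alpha}/(1-\alpha)$, $\alpha\in(0,1)$, with demand $D(p)=(1/p)^{1/\alpha}$ at price $p$ per unit rate; users choose the lowest-priced service and fill its capacity. Each SP maximizes its revenue $p_{i,M}K_{i,M}D(p_{i,M})+p_{i,S}K_{i,S}D(p_{i,S})$ in a two-stage game: bandwidth splits first, then prices; the price equilibrium for any fixed bandwidth allocation is the market-clearing price. Without the regulatory constraints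 there is a unique Nash equilibrium with $B_{i,S}^{\text{NE}}=\frac{N_f\lambda_S^{1/\alpha-1}B_i}{N_f\lambda_S^{1/\alpha-1}+N_m}$, $B_{i,M}^{\text{NE}}=\frac{N_mB_i}{N_f\lambda_S^{1/\alpha-1}+N_m}$; with the constraints a Nash equilibrium exists and is unique. *)

theory Defs
  imports Complex_Main
begin

text \<open>Demand of a user with utility r^(1-alpha)/(1-alpha) at unit price p.\<close>
definition demand :: "real \<Rightarrow> real \<Rightarrow> real" where
  "demand alpha p = (1 / p) powr (1 / alpha)"

definition cap_M :: "real \<Rightarrow> real \<Rightarrow> real \<Rightarrow> real" where
  "cap_M R0 bM1 bM2 = R0 * (bM1 + bM2)"

definition cap_S :: "real \<Rightarrow> real \<Rightarrow> real \<Rightarrow> real \<Rightarrow> real" where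
  "cap_S lam R0 bS1 bS2 = lam * R0 * (bS1 + bS2)"

text \<open>Mobile users (density Nm) can only use
 macro cells (with priority); fixed users (density Nf) use the cheapest service.
 If Nm / C_M \<ge> Nf / C_S (written multiplied out) the two markets clear separately:
 Nm * D(p_M) = C_M and Nf * D(p_S) = C_S. Otherwise fixed users spill over to the
 macro cells and a single price clears the whole market:
 (Nm + Nf) * D(p) = C_M + C_S.  Since D(p) = p^(-1/alpha), p = (N/C)^alpha.\<close>
definition price_M :: "real \<Rightarrow> real \<Rightarrow> real \<Rightarrow> real \<Rightarrow> real \<Rightarrow> real \<Rightarrow> real \<Rightarrow> real \<Rightarrow> real \<Rightarrow> real" where
  "price_M alpha Nm Nf lam R0 bM1 bS1 bM2 bS2 =
     (let CM = cap_M R0 bM1 bM2; CS = cap_S lam R0 bS1 bS2 in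
      if Nm * CS \<ge> Nf * CM then (Nm / CM) powr alpha
      else ((Nm + Nf) / (CM + CS)) powr alpha)"

definition price_S :: "real \<Rightarrow> real \<Rightarrow> real \<Rightarrow> real \<Rightarrow> real \<Rightarrow> real \<Rightarrow> real \<Rightarrow> real \<Rightarrow> real \<Rightarrow> real" where
  "price_S alpha Nm Nf lam R0 bM1 bS1 bM2 bS2 =
     (let CM = cap_M R0 bM1 bM2; CS = cap_S lam R0 bS1 bS2 in
      if Nm * CS \<ge> Nf * CM then (Nf / CS) powr alpha
      else ((Nm + Nf) / (CM + CS)) powr alpha)"

definition revenue :: "real \<Rightarrow> real \<Rightarrow> real \<Rightarrow> real \<Rightarrow> real \<Rightarrow> real \<Rightarrow> real \<Rightarrow> real \<Rightarrow> real \<Rightarrow> real" where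
  "revenue alpha Nm Nf lam R0 bM bS cM cS =
     price_M alpha Nm Nf lam R0 bM bS cM cS * (R0 * bM)
   + price_S alpha Nm Nf lam R0 bM bS cM cS * (lam * R0 * bS)"

definition feasible :: "real \<Rightarrow> real \<Rightarrow> real \<Rightarrow> real \<Rightarrow> bool" where
  "feasible B BS0 bM bS \<longleftrightarrow> bM \<ge> 0 \<and> bS \<ge> BS0 \<and> bM + bS \<le> B"

definition is_constrained_NE ::
  "real \<Rightarrow> real \<Rightarrow> real \<Rightarrow> real \<Rightarrow> real \<Rightarrow> real \<Rightarrow> real \<Rightarrow> real \<Rightarrow> real
   \<Rightarrow> real \<Rightarrow> real \<Rightarrow> real \<Rightarrow> real \<Rightarrow> bool" where
  "is_constrained_NE alpha Nm Nf lam R0 B1 B2 BS01 BS02 b1M b1S b2M b2S \<longleftrightarrow>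
     feasible B1 BS01 b1M b1S \<and> feasible B2 BS02 b2M b2S \<and>
     (\<forall>x y. feasible B1 BS01 x y \<longrightarrow>
        revenue alpha Nm Nf lam R0 x y b2M b2S \<le> revenue alpha Nm Nf lam R0 b1M b1S b2M b2S) \<and>
     (\<forall>x y. feasible B2 BS02 x y \<longrightarrow>
        revenue alpha Nm Nf lam R0 x y b1M b1S \<le> revenue alpha Nm Nf lam R0 b2M b2S b1M b1S)"

definition BS_NE :: "real \<Rightarrow> real \<Rightarrow> real \<Rightarrow> real \<Rightarrow> real \<Rightarrow> real" where
  "BS_NE alpha Nm Nf lam B =
     Nf * lam powr (1 / alpha - 1) * B / (Nf * lam powr (1 / alpha - 1) + Nm)"

end

theory Submission imports Defs begin

text \<open>Suppose both SPs allocate strictly more than their floors to small cells. Since the floors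
exceed the unconstrained equilibrium split, small cells are relatively abundant, so the two markets
clear separately, and each SP may shift a little bandwidth from small to macro cells. Optimality
then gives a first-order condition for each SP: the marginal macro-cell revenue is at most the
marginal small-cell revenue (if nobody uses macro cells, the former is infinite). The two
conditions add up to (Nm / M)^alpha \<le> (Nf lam^(1/alpha - 1) / S)^alpha for the aggregate
allocations M and S, i.e. the aggregate split is no more small-cell heavy than the unconstrained
equilibrium, contradicting the floors.\<close>

locale spectrum_market =
  fixes alpha Nm Nf lam R0 :: real
  assumes alpha_pos: "0 < alpha" and alpha_less_1: "alpha < 1" and Nm_pos: "0 < Nm" and Nf_pos: "0 < Nf"
    and lam_pos: "0 < lam" and R0_pos: "0 < R0"
begin

definition macro_coeff :: real where
  "macro_coeff = Nm powr alpha * R0 powr (1 - alpha)"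

definition small_coeff :: real where
  "small_coeff = Nf powr alpha * (lam * R0) powr (1 - alpha)"

text \<open>Revenue of an SP holding (x, y) against a competitor holding (m', s') when fixed users do
not spill over to macro cells, so each market clears on its own.\<close>
definition separated_revenue :: "real \<Rightarrow> real \<Rightarrow> real \<Rightarrow> real \<Rightarrow> real" where
  "separated_revenue x y m' s' =
     macro_coeff * x * (x + m') powr - alpha + small_coeff * y * (y + s') powr - alpha"

lemma macro_coeff_pos: "0 < macro_coeff"
  using Nm_pos R0_pos by (simp add: macro_coeff_def)

lemma small_coeff_pos: "0 < small_coeff"
  using Nf_pos lam_pos R0_pos by (simp add: small_coeff_def)

lemma powr_price_times_unit:
  fixes N R X :: real
  assumes "0 < X" "0 < R"
  shows "(N / (R * X)) powr alpha * R = N powr alpha * R powr (1 - alpha) * X powr - alpha"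
proof -
  have "(N / (R * X)) powr alpha * R = N powr alpha * (R powr - alpha * R) * X powr - alpha"
    by (simp add: powr_divide powr_mult powr_minus_divide mult_ac)
  also have "R powr - alpha * R = R powr (1 - alpha)"
    using assms by (simp add: powr_diff powr_minus_divide)
  finally show ?thesis .
qed

lemma revenue_eq_separated_revenue:
  assumes "x = 0 \<or> 0 < x + m'" "0 < y + s'" "Nf * (x + m') \<le> Nm * lam * (y + s')"
  shows "revenue alpha Nm Nf lam R0 x y m' s' = separated_revenue x y m' s'"
proof -
  have "Nf * cap_M R0 x m' \<le> Nm * cap_S lam R0 y s'"
    using mult_left_mono[OF assms(3), of R0] R0_pos by (simp add: cap_M_def cap_S_def mult_ac)
  then have "revenue alpha Nm Nf lam R0 x y m' s'
      = (Nm / (R0 * (x + m'))) powr alpha * R0 * x + (Nf / (lam * R0 * (y + s'))) powr alpha * (lam * R0) * y"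
    by (simp add: revenue_def price_M_def price_S_def Let_def) (simp add: cap_M_def cap_S_def mult_ac)
  moreover have "(Nm / (R0 * (x + m'))) powr alpha * R0 * x = macro_coeff * x * (x + m') powr - alpha"
    using assms(1) R0_pos powr_price_times_unit[of "x + m'" R0 Nm]
    by (auto simp: macro_coeff_def)
  moreover have "(Nf / (lam * R0 * (y + s'))) powr alpha * (lam * R0) * y = small_coeff * y * (y + s') powr - alpha"
    using assms(2) R0_pos lam_pos powr_price_times_unit[of "y + s'" "lam * R0" Nf]
    by (simp add: small_coeff_def)
  ultimately show ?thesis
    by (simp add: separated_revenue_def)
qed

lemma shift_to_macro_unprofitable:
  assumes best: "\<forall>x y. feasible B BSz x y \<longrightarrow>
      revenue alpha Nm Nf lam R0 x y m' s' \<le> revenue alpha Nm Nf lam R0 m s m' s'"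
    and feas: "feasible B BSz m s" and slack: "BSz < s"
    and "0 \<le> BSz" "0 \<le> m'" "0 \<le> s'"
    and regime: "Nf * (m + m') < Nm * lam * (s + s')"
  shows "\<forall>\<^sub>F h in at_right 0. separated_revenue (m + h) (s - h) m' s' \<le> separated_revenue m s m' s'"
  unfolding eventually_at_right_field
proof (intro exI conjI allI impI)
  define \<delta> where "\<delta> = (Nm * lam * (s + s') - Nf * (m + m')) / (Nm * lam + Nf)"
  have denom_pos: "0 < Nm * lam + Nf"
    using Nm_pos Nf_pos lam_pos by (simp add: add_pos_pos)
  show "0 < min (s - BSz) \<delta>"
    using slack regime denom_pos by (simp add: \<delta>_def)
  fix h :: real
  assume "0 < h" "h < min (s - BSz) \<delta>"
  then have h: "0 < h" "h < s - BSz" "h * (Nm * lam + Nf) < Nm * lam * (s + s') - Nf * (m + m')"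
    using denom_pos by (auto simp: \<delta>_def pos_less_divide_eq)
  have m: "0 \<le> m" using feas by (simp add: feasible_def)
  have "separated_revenue (m + h) (s - h) m' s' = revenue alpha Nm Nf lam R0 (m + h) (s - h) m' s'"
    using h m \<open>0 \<le> BSz\<close> \<open>0 \<le> m'\<close> \<open>0 \<le> s'\<close>
    by (intro revenue_eq_separated_revenue[symmetric]) (auto simp: algebra_simps)
  also have "\<dots> \<le> revenue alpha Nm Nf lam R0 m s m' s'"
    using best feas h by (auto simp: feasible_def)
  also have "\<dots> = separated_revenue m s m' s'"
    using m regime slack \<open>0 \<le> BSz\<close> \<open>0 \<le> m'\<close> \<open>0 \<le> s'\<close>
    by (intro revenue_eq_separated_revenue) auto
  finally show "separated_revenue (m + h) (s - h) m' s' \<le> separated_revenue m s m' s'" .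
qed

text \<open>The derivative of t \<mapsto> (x + t) (X + t)^(-alpha) at 0: the marginal revenue, per unit of
coefficient, of adding bandwidth to a market of total size X in which one holds x.\<close>
definition marginal :: "real \<Rightarrow> real \<Rightarrow> real" where
  "marginal x X = X powr - alpha - alpha * x * X powr (- alpha - 1)"

lemma separated_revenue_shift_deriv:
  assumes "0 < m + m'" "0 < s + s'"
  shows "((\<lambda>h. separated_revenue (m + h) (s - h) m' s') has_real_derivative
           macro_coeff * marginal m (m + m') - small_coeff * marginal s (s + s')) (at 0)"
  unfolding separated_revenue_def marginal_def
  using assms by (auto intro!: derivative_eq_intros simp: algebra_simps)

lemma marginal_le_if_best:
  assumes best: "\<forall>x y. feasible B BSz x y \<longrightarrow>
      revenue alpha Nm Nf lam R0 x y m' s' \<le> revenue alpha Nm Nf lam R0 m s m' s'"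
    and "feasible B BSz m s" "BSz < s" "0 \<le> BSz" "0 \<le> m'" "0 \<le> s'"
    and "Nf * (m + m') < Nm * lam * (s + s')" "0 < m + m'"
  shows "macro_coeff * marginal m (m + m') \<le> small_coeff * marginal s (s + s')"
proof (rule ccontr)
  let ?f = "\<lambda>h. separated_revenue (m + h) (s - h) m' s'"
  assume "\<not> ?thesis"
  then have "0 < macro_coeff * marginal m (m + m') - small_coeff * marginal s (s + s')"
    by simp
  moreover have "0 < s + s'"
    using assms(3-6) by simp
  ultimately obtain d where "0 < d" "\<forall>h>0. h < d \<longrightarrow> ?f 0 < ?f (0 + h)"
    using DERIV_pos_inc_right[OF separated_revenue_shift_deriv[OF assms(8)]] by blast
  then have "\<forall>\<^sub>F h in at_right 0. ?f 0 < ?f h"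
    unfolding eventually_at_right_field by auto
  moreover have "\<forall>\<^sub>F h in at_right 0. ?f h \<le> ?f 0"
    using shift_to_macro_unprofitable[OF assms(1-7)] by simp
  ultimately have "\<forall>\<^sub>F h :: real in at_right 0. False"
    by eventually_elim simp
  then show False by simp
qed

lemma empty_macro_market_not_best:
  assumes best: "\<forall>x y. feasible B BSz x y \<longrightarrow>
      revenue alpha Nm Nf lam R0 x y 0 s' \<le> revenue alpha Nm Nf lam R0 0 s 0 s'"
    and "feasible B BSz 0 s" "BSz < s" "0 \<le> BSz" "0 \<le> s'"
  shows False
proof -
  define S where "S = s + s'"
  define \<tau> where "\<tau> = (macro_coeff / (small_coeff * S powr - alpha)) powr (1 / alpha)"
  have "0 < S" using assms(3-5) by (simp add: S_def)
  have "0 < \<tau>"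
    using macro_coeff_pos small_coeff_pos \<open>0 < S\<close> by (simp add: \<tau>_def)
  have "\<forall>\<^sub>F h in at_right 0. separated_revenue h (s - h) 0 s' \<le> separated_revenue 0 s 0 s'"
    using shift_to_macro_unprofitable[OF best assms(2-4) order_refl assms(5)] \<open>0 < S\<close>
      Nm_pos lam_pos by (simp add: S_def)
  moreover have "\<forall>\<^sub>F h in at_right 0. 0 < h \<and> h < s \<and> h < \<tau>"
    unfolding eventually_at_right_field using \<open>0 < \<tau>\<close> assms(3,4)
    by (intro exI[of _ "min s \<tau>"]) auto
  ultimately obtain h where le: "separated_revenue h (s - h) 0 s' \<le> separated_revenue 0 s 0 s'"
    and h: "0 < h" "h < s" "h < \<tau>"
    using eventually_happens'[OF trivial_limit_at_right_real] eventually_conj by blast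
  have "h powr alpha < \<tau> powr alpha"
    using h alpha_pos by (simp add: powr_less_mono2)
  also have "\<tau> powr alpha = macro_coeff / (small_coeff * S powr - alpha)"
    using alpha_pos macro_coeff_pos small_coeff_pos by (simp add: \<tau>_def powr_powr)
  finally have "small_coeff * S powr - alpha < macro_coeff * h powr - alpha"
    using h \<open>0 < S\<close> macro_coeff_pos small_coeff_pos by (simp add: powr_minus_divide field_simps)
  then have "small_coeff * h * S powr - alpha < macro_coeff * h * h powr - alpha"
    using h by (simp add: mult_ac)
  moreover have "S powr - alpha \<le> (S - h) powr - alpha"
    using h \<open>0 < S\<close> alpha_pos assms(5) by (intro powr_mono2') (auto simp: S_def)
  then have "small_coeff * (s - h) * S powr - alpha \<le> small_coeff * (s - h) * (S - h) powr - alpha"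
    using h small_coeff_pos by (intro mult_left_mono) auto
  ultimately show False
    using le by (simp add: separated_revenue_def S_def algebra_simps)
qed

lemma marginal_add:
  assumes "x1 + x2 = X" "0 < X"
  shows "marginal x1 X + marginal x2 X = (2 - alpha) * X powr - alpha"
proof -
  have "X * X powr (- alpha - 1) = X powr - alpha"
    using assms(2) by (simp add: powr_mult_base)
  moreover have "marginal x1 X + marginal x2 X = 2 * X powr - alpha - alpha * ((x1 + x2) * X powr (- alpha - 1))"
    by (simp add: marginal_def algebra_simps)
  ultimately show ?thesis
    using assms(1) by (simp add: algebra_simps)
qed

lemma coeff_powr_le_imp_demand_le:
  assumes "0 < M" "0 < S"
    and "macro_coeff * M powr - alpha \<le> small_coeff * S powr - alpha"
  shows "Nm * S \<le> Nf * lam powr (1 / alpha - 1) * M"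
proof -
  have "(1 / alpha - 1) * alpha = 1 - alpha"
    using alpha_pos by (simp add: field_simps)
  then have "lam powr (1 - alpha) = (lam powr (1 / alpha - 1)) powr alpha"
    by (simp add: powr_powr)
  then have "small_coeff * S powr - alpha = (Nf * lam powr (1 / alpha - 1) / S) powr alpha * R0 powr (1 - alpha)"
    by (simp add: small_coeff_def powr_divide powr_minus_divide powr_mult)
  moreover have "macro_coeff * M powr - alpha = (Nm / M) powr alpha * R0 powr (1 - alpha)"
    by (simp add: macro_coeff_def powr_divide powr_minus_divide)
  ultimately have "(Nm / M) powr alpha \<le> (Nf * lam powr (1 / alpha - 1) / S) powr alpha"
    using assms(3) R0_pos by simp
  then have "Nm / M \<le> Nf * lam powr (1 / alpha - 1) / S"
    using powr_less_mono2[OF alpha_pos, of "Nf * lam powr (1 / alpha - 1) / S" "Nm / M"]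
      assms(2) Nf_pos by force
  then show ?thesis
    using assms(1,2) by (simp add: field_simps)
qed

lemma constrained_NE_slack_imp_demand_le:
  assumes NE: "is_constrained_NE alpha Nm Nf lam R0 B1 B2 BS01 BS02 b1M b1S b2M b2S"
    and slack: "BS01 < b1S" "BS02 < b2S" and floors: "0 \<le> BS01" "0 \<le> BS02"
    and regime: "Nf * (b1M + b2M) < Nm * lam * (b1S + b2S)"
  shows "Nm * (b1S + b2S) \<le> Nf * lam powr (1 / alpha - 1) * (b1M + b2M)"
proof -
  have feas: "feasible B1 BS01 b1M b1S" "feasible B2 BS02 b2M b2S"
    and best1: "\<forall>x y. feasible B1 BS01 x y \<longrightarrow>
        revenue alpha Nm Nf lam R0 x y b2M b2S \<le> revenue alpha Nm Nf lam R0 b1M b1S b2M b2S"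
    and best2: "\<forall>x y. feasible B2 BS02 x y \<longrightarrow>
        revenue alpha Nm Nf lam R0 x y b1M b1S \<le> revenue alpha Nm Nf lam R0 b2M b2S b1M b1S"
    using NE by (auto simp: is_constrained_NE_def)
  have "0 \<le> b1M" "0 \<le> b2M"
    using feas by (auto simp: feasible_def)
  define M where "M = b1M + b2M"
  define S where "S = b1S + b2S"
  have "0 < S"
    using slack floors by (simp add: S_def)
  consider "b1M = 0" "b2M = 0" | "0 < M"
    using \<open>0 \<le> b1M\<close> \<open>0 \<le> b2M\<close> by (fastforce simp: M_def)
  then show ?thesis
  proof cases
    case 1
    then show ?thesis
      using empty_macro_market_not_best[of B1 BS01 b2S b1S] best1 feas(1) slack floors by simp
  next
    case 2
    have "macro_coeff * marginal b1M M \<le> small_coeff * marginal b1S S"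
      using marginal_le_if_best[OF best1 feas(1) slack(1) floors(1)] \<open>0 \<le> b2M\<close> slack floors regime 2
      by (simp add: M_def S_def)
    moreover have "macro_coeff * marginal b2M M \<le> small_coeff * marginal b2S S"
      using marginal_le_if_best[OF best2 feas(2) slack(2) floors(2)] \<open>0 \<le> b1M\<close> slack floors regime 2
      by (simp add: M_def S_def add.commute)
    ultimately have "macro_coeff * (marginal b1M M + marginal b2M M) \<le> small_coeff * (marginal b1S S + marginal b2S S)"
      by (simp add: distrib_left add_mono)
    then have "(2 - alpha) * (macro_coeff * M powr - alpha) \<le> (2 - alpha) * (small_coeff * S powr - alpha)"
      by (simp add: marginal_add[OF M_def[symmetric] 2] marginal_add[OF S_def[symmetric] \<open>0 < S\<close>] mult_ac)
    then have "macro_coeff * M powr - alpha \<le> small_coeff * S powr - alpha"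
      using alpha_less_1 by simp
    then show ?thesis
      using coeff_powr_le_imp_demand_le[OF 2 \<open>0 < S\<close>] by (simp add: M_def S_def)
  qed
qed

end

lemma BS_NE_less_imp_macro_share_less:
  assumes "0 < Nm" "0 < Nf" "0 < lam"
    and "BS_NE alpha Nm Nf lam B < BS0" "BS0 \<le> bS" "bM + bS \<le> B"
  shows "Nf * lam powr (1 / alpha - 1) * bM < Nm * bS"
proof -
  define K where "K = Nf * lam powr (1 / alpha - 1)"
  have "0 < K" using assms(2,3) by (simp add: K_def)
  then have "K * B < BS0 * (K + Nm)"
    using assms(1,4) by (simp add: BS_NE_def K_def pos_divide_less_eq add_pos_pos)
  also have "\<dots> \<le> bS * (K + Nm)"
    using assms(1,5) \<open>0 < K\<close> by (intro mult_right_mono) auto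
  finally have "K * B < bS * (K + Nm)" .
  moreover have "K * (bM + bS) \<le> K * B"
    using assms(6) \<open>0 < K\<close> by (intro mult_left_mono) auto
  ultimately show ?thesis
    by (simp add: K_def algebra_simps)
qed

theorem proposition1:
  fixes alpha Nm Nf lam R0 B1 B2 BS01 BS02 b1M b1S b2M b2S :: real
  assumes "0 < alpha" "alpha < 1"
    and "Nm > 0" "Nf > 0" "lam > 1" "R0 > 0"
    and "B1 > 0" "B2 > 0"
    and "BS01 \<ge> 0" "BS02 \<ge> 0"
    and "BS_NE alpha Nm Nf lam B1 < BS01"
    and "BS_NE alpha Nm Nf lam B2 < BS02"
    and "is_constrained_NE alpha Nm Nf lam R0 B1 B2 BS01 BS02 b1M b1S b2M b2S"
  shows "(b1S = BS01 \<and> b2S = BS02)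
       \<or> (b1S = BS01 \<and> b2S > BS02)
       \<or> (b1S > BS01 \<and> b2S = BS02)"
proof (rule ccontr)
  assume "\<not> ?thesis"
  interpret spectrum_market alpha Nm Nf lam R0
    using assms(1-6) by unfold_locales auto
  define K where "K = Nf * lam powr (1 / alpha - 1)"
  have feas: "feasible B1 BS01 b1M b1S" "feasible B2 BS02 b2M b2S"
    using assms(13) by (auto simp: is_constrained_NE_def)
  with \<open>\<not> ?thesis\<close> have slack: "BS01 < b1S" "BS02 < b2S"
    by (auto simp: feasible_def)
  have "K * b1M < Nm * b1S" "K * b2M < Nm * b2S"
    using BS_NE_less_imp_macro_share_less[OF Nm_pos Nf_pos lam_pos] assms(11,12) slack feas
    by (auto simp: K_def feasible_def)
  then have scarce: "K * (b1M + b2M) < Nm * (b1S + b2S)"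
    by (simp add: distrib_left)
  have "Nf \<le> K"
    using assms(1,2,5) Nf_pos by (simp add: K_def ge_one_powr_ge_zero)
  then have "Nf * (b1M + b2M) \<le> K * (b1M + b2M)"
    using feas by (intro mult_right_mono) (auto simp: feasible_def)
  moreover have "Nm * (b1S + b2S) \<le> Nm * lam * (b1S + b2S)"
    using assms(3,5,9,10) slack by simp
  ultimately have "Nf * (b1M + b2M) < Nm * lam * (b1S + b2S)"
    using scarce by linarith
  then show False
    using constrained_NE_slack_imp_demand_le[OF assms(13) slack assms(9,10)] scarce
    by (simp add: K_def)
qed

end
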